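(* For every $n\ge1$, let $\mathcal{I}_n=\Pi_f\big((1-\omega^n)^{-1}\mathbb{Z}[\lambda]\big)\subset\Xi$. Then $$\#\mathcal{I}_n=|N(1-\omega^n)|=\omega^{-n}-\omega^{n}-2\left(\omega^{-n/2}-\omega^{n/2}\right)\cos(n\theta),$$ where $N$ denotes the field norm of $\mathbb{Q}(\lambda)/\mathbb{Q}$ and $\theta\in(0,\pi)$ is defined by $\cos\theta=\tfrac12\sqrt{\omega}(5-\omega)$. Moreover $\#\mathcal{I}_n$ is a multiple of $M_n$, the smallest positive integer lying in the ideal $(1-\omega^n)\mathbb{Z}[\lambda]$.
   Context: Let $\lambda$ be the real root of $x^3+x^2+x-1$, $\omega=\lambda^3=1-\lambda-\lambda^2\in(0,1)$; $\mathbb{Z}[\lambda]$ is the ring of integers of $\mathbb{Q}(\lambda)$. Every $x\in\mathbb{Q}(\lambda)$ is uniquely $x=r_0+r_1\lambda+r_2\lambda^2$ with $r_i\in\mathbb{Q}$; set $\Xi=\{\xi_0+\xi_1\lambda+\xi_2\lambda^2:\ \xi_i\in\mathbb{Q}\cap[0,1)\}$ and $\Pi_f(x)=\{r_0\}+\{r_1\}\lambda+\{r_2\}\lambda^2$, where $\{r\}=r-\lfloor r\rfloor$. *)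

theory Defs
  imports Complex_Main
begin

definition lam :: real where
  "lam = (THE x::real. x^3 + x^2 + x - 1 = 0)"

definition omega :: real where
  "omega = lam ^ 3"

definition Qlam :: "real set" where
  "Qlam = {of_rat a + of_rat b * lam + of_rat c * lam^2 | a b c. True}"

definition Zlam :: "real set" where
  "Zlam = {of_int a + of_int b * lam + of_int c * lam^2 | a b c. True}"

definition coords :: "real \<Rightarrow> rat \<times> rat \<times> rat" where
  "coords x = (THE (a,b,c). x = of_rat a + of_rat b * lam + of_rat c * lam^2)"

definition Pi_f :: "real \<Rightarrow> real" where
  "Pi_f x = (case coords x of (a,b,c) \<Rightarrow>
      of_rat (frac a) + of_rat (frac b) * lam + of_rat (frac c) * lam^2)"

text \<open>Field norm of Q(lambda)/Q: product of the images of x under the three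
  complex embeddings lambda \<mapsto> alpha, alpha a root of x^3+x^2+x-1.\<close>
definition fnorm :: "real \<Rightarrow> real" where
  "fnorm x = (case coords x of (a,b,c) \<Rightarrow>
     Re (\<Prod>\<alpha>\<in>{\<alpha>::complex. \<alpha>^3 + \<alpha>^2 + \<alpha> - 1 = 0}.
           of_rat a + of_rat b * \<alpha> + of_rat c * \<alpha>^2))"

definition I_set :: "nat \<Rightarrow> real set" where
  "I_set n = Pi_f ` ((\<lambda>z. z / (1 - omega ^ n)) ` Zlam)"

definition M :: "nat \<Rightarrow> nat" where
  "M n = (LEAST m::nat. m > 0 \<and> real m \<in> (\<lambda>z. (1 - omega ^ n) * z) ` Zlam)"

end

theory Submission
  imports Defs
begin

text \<open>In coordinates with respect to \<open>1, \<lambda>, \<lambda>\<^sup>2\<close>, multiplication by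
  \<open>\<beta> = 1 - \<omega>\<^sup>n\<close> is an integer matrix \<open>B\<close>, and \<open>\<Pi>\<^sub>f(\<beta>\<^sup>-\<^sup>1 \<int>[\<lambda>])\<close> corresponds to
  the kernel of \<open>B\<close> acting on the torus \<open>(\<rat>/\<int>)\<^sup>3\<close>. Unimodular row operations make
  \<open>B\<close> triangular without changing this kernel or \<open>|det B|\<close>, and a triangular kernel
  visibly has \<open>|det B|\<close> points. By Vieta's formulas \<open>det B = N(\<beta>) = (1 - \<omega>\<^sup>n) |1 - z\<^sup>n|\<^sup>2\<close>
  with \<open>z = \<alpha>\<^sup>3\<close> for a non-real root \<open>\<alpha>\<close> of \<open>x\<^sup>3 + x\<^sup>2 + x - 1\<close>; since
  \<open>|z|\<^sup>2 = 1/\<omega>\<close> and \<open>Re z = (5 - \<omega>)/2 = |z| cos \<theta>\<close>, this gives the closed formula.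
  Finally \<open>N(\<beta>)\<close> is \<open>\<beta>\<close> times an adjugate entry, so it lies in \<open>\<beta> \<int>[\<lambda>]\<close> and
  \<open>M\<^sub>n\<close> divides it.\<close>

section \<open>The real root \<open>\<lambda>\<close>\<close>

lemma cubic_root_unique:
  fixes x y :: real
  assumes "x^3 + x^2 + x - 1 = 0" and "y^3 + y^2 + y - 1 = 0"
  shows "x = y"
proof -
  have "(x - y) * ((x + y + 1)^2 + x^2 + y^2 + 1) = 2 * ((x^3 + x^2 + x - 1) - (y^3 + y^2 + y - 1))"
    by (simp add: algebra_simps power2_eq_square power3_eq_cube)
  moreover have "(x + y + 1)^2 + x^2 + y^2 + 1 > 0"
    by (intro add_nonneg_pos) simp_all
  ultimately show ?thesis
    using assms by simp
qed

lemma lam_root: "lam^3 + lam^2 + lam - 1 = 0"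
proof -
  have "\<exists>x\<ge>0. x \<le> 1 \<and> (\<lambda>x::real. x^3 + x^2 + x - 1) x = 0"
    by (rule IVT) (auto intro!: continuous_intros)
  then have "\<exists>!x::real. x^3 + x^2 + x - 1 = 0"
    using cubic_root_unique by blast
  then show ?thesis
    unfolding lam_def by (rule theI')
qed

lemma lam_cube: "lam^3 = 1 - lam - lam^2"
  using lam_root by simp

lemma lam_mult_inverse: "lam * (1 + lam + lam^2) = 1"
  using lam_root by (simp add: algebra_simps power2_eq_square power3_eq_cube)

lemma lam_pos: "0 < lam"
proof -
  have "1 + lam + lam^2 > 0"
    using sum_power2_gt_zero_iff[of "lam + 1/2" "1/2"] by (simp add: power2_eq_square algebra_simps)
  moreover have "0 < lam * (1 + lam + lam^2)"
    by (simp add: lam_mult_inverse)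
  ultimately show ?thesis
    by (simp add: zero_less_mult_iff)
qed

lemma lam_less_one: "lam < 1"
proof (rule ccontr)
  assume "\<not> lam < 1"
  then have "1 \<le> lam" "1 \<le> lam^2" "1 \<le> lam^3"
    by (auto simp: one_le_power)
  moreover have "lam * (1 + lam + lam^2) = lam + lam^2 + lam^3"
    by (simp add: algebra_simps power2_eq_square power3_eq_cube)
  ultimately show False
    using lam_mult_inverse by linarith
qed

lemma omega_pos: "0 < omega"
  unfolding omega_def using lam_pos by simp

lemma omega_less_one: "omega < 1"
  unfolding omega_def using lam_pos lam_less_one by (simp add: power_less_one_iff)

lemma cubic_no_rational_root: "(t::rat)^3 + t^2 + t - 1 \<noteq> 0"
proof
  assume root: "t^3 + t^2 + t - 1 = 0"
  obtain p q where pq: "quotient_of t = (p, q)"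
    by (cases "quotient_of t") auto
  have q_pos: "q > 0" and "coprime p q" and t: "t = of_int p / of_int q"
    using pq quotient_of_denom_pos quotient_of_coprime quotient_of_div by blast+
  have "of_int (p^3 + p^2*q + p*q^2 - q^3) = (of_int q)^3 * (t^3 + t^2 + t - 1)"
    using q_pos by (simp add: t field_simps power2_eq_square power3_eq_cube)
  then have cleared: "p^3 + p^2*q + p*q^2 - q^3 = 0"
    using root by (metis mult_zero_right of_int_eq_0_iff)
  then have "p^3 = q * (q^2 - p^2 - p*q)"
    by (simp add: algebra_simps power2_eq_square power3_eq_cube)
  then have "q dvd p^3"
    by simp
  with \<open>coprime p q\<close> have "is_unit q"
    by (metis coprime_commute coprime_common_divisor coprime_power_right_iff dvd_refl)
  then have "q = 1"
    using q_pos by simp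
  then have "p * (p^2 + p + 1) = 1"
    using cleared by (simp add: algebra_simps power2_eq_square power3_eq_cube)
  then have "p dvd 1"
    by (metis dvd_triv_left)
  then have "p = 1 \<or> p = -1"
    by (simp add: zdvd1_eq abs_if split: if_splits)
  then show False
    using cleared \<open>q = 1\<close> by auto
qed

section \<open>Rational coordinates with respect to \<open>1, \<lambda>, \<lambda>\<^sup>2\<close>\<close>

type_synonym qvec = "rat \<times> rat \<times> rat"

definition of_coords :: "qvec \<Rightarrow> real" where
  "of_coords = (\<lambda>(a, b, c). of_rat a + of_rat b * lam + of_rat c * lam^2)"

lemma lam_not_rat: "lam \<noteq> of_rat t"
proof
  assume "lam = of_rat t"
  then have "of_rat (t^3 + t^2 + t - 1) = (0::real)"
    using lam_root by (simp add: of_rat_add of_rat_diff of_rat_power)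
  then show False
    using cubic_no_rational_root[of t] by simp
qed

lemma lam_linear_indep:
  assumes "of_rat a + of_rat b * lam = 0"
  shows "a = 0 \<and> b = 0"
proof (cases "b = 0")
  case False
  then have "lam = of_rat (- a / b)"
    using assms by (simp add: of_rat_divide of_rat_minus field_simps)
  then show ?thesis
    using lam_not_rat by blast
qed (use assms in simp)

lemma cubic_division:
  fixes x p q :: "'a::comm_ring_1"
  shows "x^3 + x^2 + x - 1
    = (x^2 - p*x - q) * (x + 1 + p) + (1 + p + p^2 + q) * x + (q * (1 + p) - 1)"
  by (simp add: algebra_simps power2_eq_square power3_eq_cube)

lemma lam_quadratic_indep:
  assumes "of_rat a + of_rat b * lam + of_rat c * lam^2 = 0"
  shows "a = 0 \<and> b = 0 \<and> c = 0"
proof (cases "c = 0")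
  case True
  then show ?thesis
    using assms lam_linear_indep by simp
next
  case False
  define p where "p = - b / c"
  define q where "q = - a / c"
  have quad: "lam^2 - of_rat p * lam - of_rat q = 0"
    using assms False unfolding p_def q_def by (simp add: of_rat_divide of_rat_minus field_simps)
  \<comment> \<open>The remainder of the cubic modulo this quadratic vanishes at \<open>\<lambda>\<close>, hence is zero,
    and then \<open>-1-p\<close> is a rational root of the cubic.\<close>
  have "0 = (lam^2 - of_rat p * lam - of_rat q) * (lam + 1 + of_rat p)
      + (1 + of_rat p + (of_rat p)^2 + of_rat q) * lam + (of_rat q * (1 + of_rat p) - 1)"
    unfolding cubic_division[symmetric] by (rule lam_root[symmetric])
  also have "\<dots> = of_rat (q * (1 + p) - 1) + of_rat (1 + p + p^2 + q) * lam"
    unfolding quad by (simp add: of_rat_add of_rat_diff of_rat_mult of_rat_power)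
  finally have "of_rat (q * (1 + p) - 1) + of_rat (1 + p + p^2 + q) * lam = 0" ..
  then have "1 + p + p^2 + q = 0" "q * (1 + p) - 1 = 0"
    using lam_linear_indep by blast+
  then have "(- 1 - p)^3 + (- 1 - p)^2 + (- 1 - p) - 1 = 0"
    using cubic_division[of "- 1 - p" p q] by simp
  then show ?thesis
    using cubic_no_rational_root by blast
qed

lemma inj_of_coords: "inj of_coords"
proof (rule injI)
  fix v w assume "of_coords v = of_coords w"
  moreover obtain a b c a' b' c' where "v = (a, b, c)" "w = (a', b', c')"
    by (cases v, cases w) auto
  ultimately show "v = w"
    using lam_quadratic_indep[of "a - a'" "b - b'" "c - c'"]
    by (simp add: of_coords_def of_rat_diff algebra_simps)
qed

lemma coords_of_coords: "coords (of_coords w) = w"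
  unfolding coords_def
proof (rule the_equality)
  show "case w of (a, b, c) \<Rightarrow> of_coords w = of_rat a + of_rat b * lam + of_rat c * lam^2"
    by (cases w) (simp add: of_coords_def)
next
  fix v assume "case v of (a, b, c) \<Rightarrow> of_coords w = of_rat a + of_rat b * lam + of_rat c * lam^2"
  then have "of_coords w = of_coords v"
    by (cases v) (simp add: of_coords_def)
  then show "v = w"
    using inj_of_coords by (simp add: inj_eq)
qed

definition frac_coords :: "qvec \<Rightarrow> qvec" where
  "frac_coords = (\<lambda>(x, y, z). (frac x, frac y, frac z))"

lemma Pi_f_of_coords: "Pi_f (of_coords w) = of_coords (frac_coords w)"
  by (cases w) (simp only: Pi_f_def coords_of_coords, simp add: frac_coords_def of_coords_def)

section \<open>Kernels of integer matrices on the torus\<close>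

lemma card_frac_solutions_pos:
  fixes c :: "'a::floor_ceiling" and d :: int
  assumes "d > 0"
  shows "card {x. 0 \<le> x \<and> x < 1 \<and> of_int d * x + c \<in> \<int>} = nat d"
proof -
  let ?S = "{x. 0 \<le> x \<and> x < 1 \<and> of_int d * x + c \<in> \<int>}"
  let ?g = "\<lambda>k. (of_int k - c) / (of_int d :: 'a)"
  have d: "(of_int d :: 'a) > 0"
    using assms by simp
  have "?S = ?g ` {\<lceil>c\<rceil> ..< \<lceil>c\<rceil> + d}"
  proof (intro set_eqI iffI)
    fix x assume "x \<in> ?S"
    then obtain k where k: "of_int d * x + c = of_int k" and "0 \<le> x" "x < 1"
      by (auto elim: Ints_cases)
    moreover have "0 \<le> of_int d * x" "of_int d * x < of_int d"
      using d \<open>0 \<le> x\<close> \<open>x < 1\<close> mult_strict_left_mono[of x 1 "of_int d"] by simp_all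
    ultimately have "c \<le> of_int k" "of_int k < c + of_int d"
      by linarith+
    then have "\<lceil>c\<rceil> \<le> k" "k - d < \<lceil>c\<rceil>"
      by (simp_all add: ceiling_le_iff less_ceiling_iff)
    then have "k \<in> {\<lceil>c\<rceil> ..< \<lceil>c\<rceil> + d}"
      by simp
    moreover have "x = ?g k"
      using k d by (simp add: field_simps)
    ultimately show "x \<in> ?g ` {\<lceil>c\<rceil> ..< \<lceil>c\<rceil> + d}"
      by blast
  next
    fix x assume "x \<in> ?g ` {\<lceil>c\<rceil> ..< \<lceil>c\<rceil> + d}"
    then obtain k where "\<lceil>c\<rceil> \<le> k" "k - d < \<lceil>c\<rceil>" and x: "x = ?g k"
      by auto
    then have "c \<le> of_int k" "of_int k < c + of_int d"
      by (simp_all add: ceiling_le_iff less_ceiling_iff)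
    then show "x \<in> ?S"
      using d by (simp add: x field_simps)
  qed
  moreover have "inj_on ?g {\<lceil>c\<rceil> ..< \<lceil>c\<rceil> + d}"
    using d by (intro inj_onI) (simp add: divide_cancel_right)
  ultimately show ?thesis
    by (simp add: card_image)
qed

lemma card_frac_solutions:
  fixes c :: "'a::floor_ceiling" and d :: int
  assumes "d \<noteq> 0"
  shows "finite {x. 0 \<le> x \<and> x < 1 \<and> of_int d * x + c \<in> \<int>}
    \<and> card {x. 0 \<le> x \<and> x < 1 \<and> of_int d * x + c \<in> \<int>} = nat \<bar>d\<bar>"
proof -
  have "card {x. 0 \<le> x \<and> x < 1 \<and> of_int d * x + c \<in> \<int>} = nat \<bar>d\<bar>"
  proof (cases "d > 0")
    case False
    have "of_int d * x + c \<in> \<int> \<longleftrightarrow> of_int (- d) * x + (- c) \<in> \<int>" for x :: 'a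
      using minus_in_Ints_iff[of "of_int d * x + c"] by simp
    then show ?thesis
      using card_frac_solutions_pos[of "- d" "- c"] assms False by simp
  qed (simp add: card_frac_solutions_pos)
  then show ?thesis
    using assms card_ge_0_finite by force
qed

type_synonym ivec = "int \<times> int \<times> int"

fun dot3 :: "ivec \<Rightarrow> qvec \<Rightarrow> rat" where
  "dot3 (a, b, c) (x, y, z) = of_int a * x + of_int b * y + of_int c * z"

fun row_comb :: "int \<Rightarrow> ivec \<Rightarrow> int \<Rightarrow> ivec \<Rightarrow> ivec" where
  "row_comb u (a, b, c) v (a', b', c') = (u*a + v*a', u*b + v*b', u*c + v*c')"

fun det3 :: "ivec \<Rightarrow> ivec \<Rightarrow> ivec \<Rightarrow> int" where
  "det3 (a1, a2, a3) (b1, b2, b3) (c1, c2, c3) =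
     a1*(b2*c3 - b3*c2) - a2*(b1*c3 - b3*c1) + a3*(b1*c2 - b2*c1)"

fun in_unit_cube :: "qvec \<Rightarrow> bool" where
  "in_unit_cube (x, y, z) \<longleftrightarrow> 0 \<le> x \<and> x < 1 \<and> 0 \<le> y \<and> y < 1 \<and> 0 \<le> z \<and> z < 1"

text \<open>The torus \<open>(\<rat>/\<int>)\<^sup>3\<close> is represented by its fundamental domain \<open>[0,1)\<^sup>3\<close>.\<close>
definition torus_kernel :: "ivec \<Rightarrow> ivec \<Rightarrow> ivec \<Rightarrow> qvec set" where
  "torus_kernel r1 r2 r3 =
     {w. in_unit_cube w \<and> dot3 r1 w \<in> \<int> \<and> dot3 r2 w \<in> \<int> \<and> dot3 r3 w \<in> \<int>}"

lemma unimodular_Ints_iff: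
  fixes A B :: "'a::comm_ring_1"
  assumes "u*t - v*s = 1"
  shows "of_int u * A + of_int v * B \<in> \<int> \<and> of_int s * A + of_int t * B \<in> \<int>
     \<longleftrightarrow> A \<in> \<int> \<and> B \<in> \<int>"
proof -
  have "A = of_int t * (of_int u * A + of_int v * B) - of_int v * (of_int s * A + of_int t * B)"
   and "B = of_int u * (of_int s * A + of_int t * B) - of_int s * (of_int u * A + of_int v * B)"
    using arg_cong[OF assms, of "\<lambda>k. of_int k * A"] arg_cong[OF assms, of "\<lambda>k. of_int k * B"]
    by (simp_all add: algebra_simps)
  then show ?thesis
    by (metis Ints_add Ints_diff Ints_mult Ints_of_int)
qed

lemma dot3_row_comb: "dot3 (row_comb u r v s) w = of_int u * dot3 r w + of_int v * dot3 s w"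
  by (cases r; cases s; cases w) (simp add: algebra_simps)

lemma fst_row_comb: "fst (row_comb u r v s) = u * fst r + v * fst s"
  by (cases r; cases s) simp

lemma fst_snd_row_comb: "fst (snd (row_comb u r v s)) = u * fst (snd r) + v * fst (snd s)"
  by (cases r; cases s) simp

lemma det3_row_comb_12:
  "det3 (row_comb u r1 v r2) (row_comb s r1 t r2) r3 = (u*t - v*s) * det3 r1 r2 r3"
  by (cases r1; cases r2; cases r3) (simp add: algebra_simps)

lemma det3_row_comb_13:
  "det3 (row_comb u r1 v r3) r2 (row_comb s r1 t r3) = (u*t - v*s) * det3 r1 r2 r3"
  by (cases r1; cases r2; cases r3) (simp add: algebra_simps)

lemma det3_row_comb_23:
  "det3 r1 (row_comb u r2 v r3) (row_comb s r2 t r3) = (u*t - v*s) * det3 r1 r2 r3"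
  by (cases r1; cases r2; cases r3) (simp add: algebra_simps)

lemma unimodular_annihilator:
  fixes a b :: int
  obtains u v s t where "u*t - v*s = 1" and "s*a + t*b = 0"
proof (cases "gcd a b = 0")
  case True
  then show ?thesis
    using that[of 1 1 0 0] by simp
next
  case False
  then obtain a' b' where ab: "a = a' * gcd a b" "b = b' * gcd a b" and "coprime a' b'"
    using gcd_coprime_exists by blast
  moreover obtain u v where "u * a' + v * b' = gcd a' b'"
    using bezout_int by blast
  moreover have "- b' * a + a' * b = 0"
    by (subst ab(1), subst ab(2)) simp
  ultimately show ?thesis
    using that[of u a' v "- b'"] by (simp add: algebra_simps)
qed

lemma torus_kernel_triangularize:
  obtains a b c d e f where
    "torus_kernel r1 r2 r3 = torus_kernel (a, b, c) (0, d, e) (0, 0, f)"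
    and "det3 r1 r2 r3 = a * d * f"
proof -
  obtain u v s t where uvst: "u*t - v*s = 1" "s * fst r1 + t * fst r2 = 0"
    using unimodular_annihilator by metis
  define A1 A2 where "A1 = row_comb u r1 v r2" and "A2 = row_comb s r1 t r2"
  obtain u' v' s' t' where uvst': "u'*t' - v'*s' = 1" "s' * fst A1 + t' * fst r3 = 0"
    using unimodular_annihilator by metis
  define B1 B3 where "B1 = row_comb u' A1 v' r3" and "B3 = row_comb s' A1 t' r3"
  obtain u'' v'' s'' t'' where uvst'': "u''*t'' - v''*s'' = 1"
      "s'' * fst (snd A2) + t'' * fst (snd B3) = 0"
    using unimodular_annihilator by metis
  define C2 C3 where "C2 = row_comb u'' A2 v'' B3" and "C3 = row_comb s'' A2 t'' B3"
  have "fst A2 = 0" "fst B3 = 0"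
    using uvst uvst' by (simp_all add: A2_def B3_def fst_row_comb)
  then have "fst C2 = 0" "fst C3 = 0" "fst (snd C3) = 0"
    using uvst'' by (simp_all add: C2_def C3_def fst_row_comb fst_snd_row_comb)
  then obtain a b c d e f where rows: "B1 = (a, b, c)" "C2 = (0, d, e)" "C3 = (0, 0, f)"
    by (metis prod.collapse)
  have "torus_kernel r1 r2 r3 = torus_kernel A1 A2 r3"
    unfolding torus_kernel_def A1_def A2_def dot3_row_comb
    using unimodular_Ints_iff[OF uvst(1)] by blast
  also have "\<dots> = torus_kernel B1 A2 B3"
    unfolding torus_kernel_def B1_def B3_def dot3_row_comb
    using unimodular_Ints_iff[OF uvst'(1)] by blast
  also have "\<dots> = torus_kernel B1 C2 C3"
    unfolding torus_kernel_def C2_def C3_def dot3_row_comb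
    using unimodular_Ints_iff[OF uvst''(1)] by blast
  finally have "torus_kernel r1 r2 r3 = torus_kernel (a, b, c) (0, d, e) (0, 0, f)"
    by (simp only: rows)
  moreover have "det3 r1 r2 r3 = det3 B1 C2 C3"
    using uvst uvst' uvst''
    by (simp add: A1_def A2_def B1_def B3_def C2_def C3_def
        det3_row_comb_12 det3_row_comb_13 det3_row_comb_23)
  ultimately show ?thesis
    using that by (simp add: rows)
qed

lemma card_Sigma_constant:
  assumes "finite A" and "\<And>x. x \<in> A \<Longrightarrow> finite (B x) \<and> card (B x) = k"
  shows "finite (Sigma A B) \<and> card (Sigma A B) = card A * k"
  using assms by (simp add: card_SigmaI)

lemma card_torus_kernel_triangular:
  assumes "a * d * f \<noteq> 0"
  shows "finite (torus_kernel (a, b, c) (0, d, e) (0, 0, f))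
    \<and> card (torus_kernel (a, b, c) (0, d, e) (0, 0, f)) = nat \<bar>a * d * f\<bar>"
proof -
  define Z where "Z = {z::rat. 0 \<le> z \<and> z < 1 \<and> of_int f * z \<in> \<int>}"
  define Y where "Y z = {y::rat. 0 \<le> y \<and> y < 1 \<and> of_int d * y + of_int e * z \<in> \<int>}" for z
  define X where "X z y = {x::rat. 0 \<le> x \<and> x < 1 \<and> of_int a * x + (of_int b * y + of_int c * z) \<in> \<int>}" for z y
  have "finite Z \<and> card Z = nat \<bar>f\<bar>"
    using assms card_frac_solutions[of f 0] unfolding Z_def by simp
  moreover have "finite (Y z) \<and> card (Y z) = nat \<bar>d\<bar>" for z
    using assms card_frac_solutions[of d] unfolding Y_def by simp
  moreover have "finite (X z y) \<and> card (X z y) = nat \<bar>a\<bar>" for z y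
    using assms card_frac_solutions[of a] unfolding X_def by simp
  ultimately have fin: "finite (SIGMA z:Z. SIGMA y:Y z. X z y)"
    and card: "card (SIGMA z:Z. SIGMA y:Y z. X z y) = nat \<bar>f\<bar> * (nat \<bar>d\<bar> * nat \<bar>a\<bar>)"
    using card_Sigma_constant[of Z "\<lambda>z. SIGMA y:Y z. X z y"] card_Sigma_constant by auto
  define rev3 where "rev3 = (\<lambda>(z::rat, y::rat, x::rat). (x, y, z))"
  have "torus_kernel (a, b, c) (0, d, e) (0, 0, f) = rev3 ` (SIGMA z:Z. SIGMA y:Y z. X z y)"
    unfolding torus_kernel_def rev3_def X_def Y_def Z_def
    by (auto simp: image_iff add.assoc)
  moreover have "inj rev3"
    unfolding rev3_def by (rule injI) auto
  ultimately show ?thesis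
    using fin card by (simp add: card_image inj_on_subset abs_mult nat_mult_distrib)
qed

lemma card_torus_kernel:
  assumes "det3 r1 r2 r3 \<noteq> 0"
  shows "finite (torus_kernel r1 r2 r3) \<and> card (torus_kernel r1 r2 r3) = nat \<bar>det3 r1 r2 r3\<bar>"
proof -
  obtain a b c d e f where
    "torus_kernel r1 r2 r3 = torus_kernel (a, b, c) (0, d, e) (0, 0, f)"
    and "det3 r1 r2 r3 = a * d * f"
    by (rule torus_kernel_triangularize)
  then show ?thesis
    using assms card_torus_kernel_triangular[of a d f b c e] by simp
qed

section \<open>Multiplication by elements of \<open>\<int>[\<lambda>]\<close>\<close>

fun of_int_coords :: "ivec \<Rightarrow> qvec" where
  "of_int_coords (a, b, c) = (of_int a, of_int b, of_int c)"

fun eval_coords :: "ivec \<Rightarrow> 'a::comm_ring_1 \<Rightarrow> 'a" where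
  "eval_coords (a, b, c) y = of_int a + of_int b * y + of_int c * y^2"

lemma of_coords_of_int_coords: "of_coords (of_int_coords v) = eval_coords v lam"
  by (cases v) (simp add: of_coords_def)

lemma Zlam_eq: "Zlam = range (\<lambda>v. eval_coords v lam)"
  by (fastforce simp: Zlam_def image_iff split_paired_Ex)

lemma eval_coords_in_Zlam: "eval_coords v lam \<in> Zlam"
  unfolding Zlam_eq by (rule rangeI)

lemma reduced_cubic_mult:
  fixes L :: "'a::comm_ring_1"
  assumes "L^3 = 1 - L - L^2"
  shows "(A + B*L + C*L^2) * (x + y*L + z*L^2)
    = (A*x + C*y + (B - C)*z) + (B*x + (A - C)*y + (2*C - B)*z) * L + (C*x + (B - C)*y + (A - B)*z) * L^2"
proof -
  have "(A + B*L + C*L^2) * (x + y*L + z*L^2)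
    = (A*x + C*y + (B - C)*z) + (B*x + (A - C)*y + (2*C - B)*z) * L + (C*x + (B - C)*y + (A - B)*z) * L^2
      + (B*z + C*y - C*z + C*z*L) * (L^3 + L^2 + L - 1)"
    by (simp add: algebra_simps power2_eq_square power3_eq_cube)
  then show ?thesis
    using assms by simp
qed

text \<open>The matrix of multiplication by \<open>a + b\<lambda> + c\<lambda>\<^sup>2\<close> on coordinates
  with respect to \<open>1, \<lambda>, \<lambda>\<^sup>2\<close>, read off from \<open>reduced_cubic_mult\<close>.\<close>
fun mult_row1 mult_row2 mult_row3 :: "ivec \<Rightarrow> ivec" where
  "mult_row1 (a, b, c) = (a, c, b - c)"
| "mult_row2 (a, b, c) = (b, a - c, 2*c - b)"
| "mult_row3 (a, b, c) = (c, b - c, a - b)"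

lemma of_coords_mult:
  "of_coords (dot3 (mult_row1 v) w, dot3 (mult_row2 v) w, dot3 (mult_row3 v) w)
     = eval_coords v lam * of_coords w"
proof -
  obtain a b c x y z where "v = (a, b, c)" "w = (x, y, z)"
    by (cases v, cases w) auto
  then show ?thesis
    by (simp add: of_coords_def reduced_cubic_mult[OF lam_cube] of_rat_add of_rat_diff of_rat_mult)
qed

lemma dot3_solvable:
  assumes "det3 r1 r2 r3 \<noteq> 0"
  obtains y where "dot3 r1 y = k1" and "dot3 r2 y = k2" and "dot3 r3 y = k3"
proof -
  obtain a1 a2 a3 b1 b2 b3 c1 c2 c3 where r: "r1 = (a1, a2, a3)" "r2 = (b1, b2, b3)" "r3 = (c1, c2, c3)"
    by (cases r1, cases r2, cases r3) auto
  define D where "D = rat_of_int (det3 r1 r2 r3)"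
  define Y1 Y2 Y3 where
    "Y1 = of_int (b2*c3 - b3*c2) * k1 + of_int (a3*c2 - a2*c3) * k2 + of_int (a2*b3 - a3*b2) * k3"
    and "Y2 = of_int (b3*c1 - b1*c3) * k1 + of_int (a1*c3 - a3*c1) * k2 + of_int (a3*b1 - a1*b3) * k3"
    and "Y3 = of_int (b1*c2 - b2*c1) * k1 + of_int (a2*c1 - a1*c2) * k2 + of_int (a1*b2 - a2*b1) * k3"
  have adj: "dot3 r1 (Y1, Y2, Y3) = D * k1" "dot3 r2 (Y1, Y2, Y3) = D * k2" "dot3 r3 (Y1, Y2, Y3) = D * k3"
    by (simp_all add: r Y1_def Y2_def Y3_def D_def algebra_simps)
  have scale: "dot3 r (x / D, y / D, z / D) = dot3 r (x, y, z) / D" for r x y z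
    by (cases r) (simp add: add_divide_distrib)
  have "D \<noteq> 0"
    using assms by (simp add: D_def)
  then have "dot3 r1 (Y1 / D, Y2 / D, Y3 / D) = k1" "dot3 r2 (Y1 / D, Y2 / D, Y3 / D) = k2"
    "dot3 r3 (Y1 / D, Y2 / D, Y3 / D) = k3"
    by (simp_all add: scale adj)
  then show ?thesis
    using that by blast
qed

lemma dot3_adjugate_column:
  obtains z where "dot3 r1 (of_int_coords z) = of_int (det3 r1 r2 r3)"
    and "dot3 r2 (of_int_coords z) = 0" and "dot3 r3 (of_int_coords z) = 0"
proof -
  obtain a1 a2 a3 b1 b2 b3 c1 c2 c3 where r: "r1 = (a1, a2, a3)" "r2 = (b1, b2, b3)" "r3 = (c1, c2, c3)"
    by (cases r1, cases r2, cases r3) auto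
  show ?thesis
    using that[of "(b2*c3 - b3*c2, b3*c1 - b1*c3, b1*c2 - b2*c1)"] by (simp add: r algebra_simps)
qed

lemma in_unit_cube_frac_coords: "in_unit_cube (frac_coords w)"
  by (cases w) (simp add: frac_coords_def frac_lt_1)

lemma frac_coords_id: "in_unit_cube w \<Longrightarrow> frac_coords w = w"
  by (cases w) (simp add: frac_coords_def frac_eq)

lemma dot3_frac_coords_Ints:
  assumes "dot3 r w \<in> \<int>"
  shows "dot3 r (frac_coords w) \<in> \<int>"
proof -
  obtain p q s x y z where "r = (p, q, s)" "w = (x, y, z)"
    by (cases r, cases w) auto
  then have "dot3 r (frac_coords w) = dot3 r w - of_int (p * \<lfloor>x\<rfloor> + q * \<lfloor>y\<rfloor> + s * \<lfloor>z\<rfloor>)"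
    by (simp add: frac_coords_def frac_def algebra_simps)
  then show ?thesis
    using assms by simp
qed

lemma Pi_f_divide_image:
  assumes det: "det3 (mult_row1 v) (mult_row2 v) (mult_row3 v) \<noteq> 0"
    and nonzero: "eval_coords v lam \<noteq> 0"
  shows "Pi_f ` ((\<lambda>z. z / eval_coords v lam) ` Zlam)
    = of_coords ` torus_kernel (mult_row1 v) (mult_row2 v) (mult_row3 v)"
    (is "Pi_f ` ((\<lambda>z. z / ?\<beta>) ` Zlam) = of_coords ` ?K")
proof (intro set_eqI iffI)
  fix x assume "x \<in> Pi_f ` ((\<lambda>z. z / ?\<beta>) ` Zlam)"
  then obtain k1 k2 k3 where x: "x = Pi_f (eval_coords (k1, k2, k3) lam / ?\<beta>)"
    by (auto simp: Zlam_eq)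
  obtain y where y: "dot3 (mult_row1 v) y = of_int k1" "dot3 (mult_row2 v) y = of_int k2"
      "dot3 (mult_row3 v) y = of_int k3"
    using dot3_solvable[OF det] by metis
  then have "eval_coords (k1, k2, k3) lam = ?\<beta> * of_coords y"
    using of_coords_mult[of v y] by (simp add: of_coords_def)
  then have "x = of_coords (frac_coords y)"
    using nonzero by (simp add: x Pi_f_of_coords)
  moreover have "frac_coords y \<in> ?K"
    using y by (simp add: torus_kernel_def in_unit_cube_frac_coords dot3_frac_coords_Ints)
  ultimately show "x \<in> of_coords ` ?K"
    by blast
next
  fix x assume "x \<in> of_coords ` ?K"
  then obtain w where x: "x = of_coords w" and w: "w \<in> ?K"
    by blast
  then obtain k1 k2 k3 where "dot3 (mult_row1 v) w = of_int k1" "dot3 (mult_row2 v) w = of_int k2"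
      "dot3 (mult_row3 v) w = of_int k3"
    unfolding torus_kernel_def by (auto elim!: Ints_cases)
  then have "eval_coords (k1, k2, k3) lam = ?\<beta> * of_coords w"
    using of_coords_mult[of v w] by (simp add: of_coords_def)
  then have "x = Pi_f (eval_coords (k1, k2, k3) lam / ?\<beta>)"
    using nonzero w by (simp add: x Pi_f_of_coords frac_coords_id torus_kernel_def)
  then show "x \<in> Pi_f ` ((\<lambda>z. z / ?\<beta>) ` Zlam)"
    using eval_coords_in_Zlam by blast
qed

lemma card_Pi_f_divide_image:
  assumes "det3 (mult_row1 v) (mult_row2 v) (mult_row3 v) \<noteq> 0"
    and "eval_coords v lam \<noteq> 0"
  shows "finite (Pi_f ` ((\<lambda>z. z / eval_coords v lam) ` Zlam))
    \<and> card (Pi_f ` ((\<lambda>z. z / eval_coords v lam) ` Zlam))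
      = nat \<bar>det3 (mult_row1 v) (mult_row2 v) (mult_row3 v)\<bar>"
  using card_torus_kernel[OF assms(1)] inj_of_coords
  by (simp add: Pi_f_divide_image[OF assms] card_image inj_on_subset)

section \<open>The norm of \<open>1 - \<omega>\<^sup>n\<close>\<close>

fun pow_coeffs :: "nat \<Rightarrow> ivec" where
  "pow_coeffs 0 = (1, 0, 0)"
| "pow_coeffs (Suc k) = (case pow_coeffs k of (a, b, c) \<Rightarrow> (c, a - c, b - c))"

lemma eval_pow_coeffs:
  fixes y :: "'a::comm_ring_1"
  assumes "y^3 = 1 - y - y^2"
  shows "eval_coords (pow_coeffs k) y = y^k"
proof (induction k)
  case (Suc k)
  obtain a b c where "pow_coeffs k = (a, b, c)"
    by (cases "pow_coeffs k") auto
  moreover have "y * (of_int a + of_int b * y + of_int c * y^2)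
      = of_int c + of_int (a - c) * y + of_int (b - c) * y^2 + of_int c * (y^3 - (1 - y - y^2))"
    by (simp add: algebra_simps power2_eq_square power3_eq_cube)
  ultimately show ?case
    using Suc.IH assms by simp
qed simp

definition one_minus_pow_coeffs :: "nat \<Rightarrow> ivec" where
  "one_minus_pow_coeffs k = (case pow_coeffs k of (a, b, c) \<Rightarrow> (1 - a, - b, - c))"

lemma eval_one_minus_pow_coeffs:
  fixes y :: "'a::comm_ring_1"
  assumes "y^3 = 1 - y - y^2"
  shows "eval_coords (one_minus_pow_coeffs k) y = 1 - y^k"
proof -
  obtain a b c where "pow_coeffs k = (a, b, c)"
    by (cases "pow_coeffs k") auto
  then have "eval_coords (one_minus_pow_coeffs k) y = 1 - eval_coords (pow_coeffs k) y"
    by (simp add: one_minus_pow_coeffs_def algebra_simps)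
  then show ?thesis
    by (simp add: eval_pow_coeffs[OF assms])
qed

lemma eval_coords_vieta_prod:
  fixes x y z :: "'a::idom"
  assumes "x + y + z = -1" and "x*y + x*z + y*z = 1" and "x*y*z = 1"
  shows "eval_coords v x * eval_coords v y * eval_coords v z
    = of_int (det3 (mult_row1 v) (mult_row2 v) (mult_row3 v))"
proof -
  obtain a b c where v: "v = (a, b, c)"
    by (cases v) auto
  have "(A + B*x + C*x^2) * (A + B*y + C*y^2) * (A + B*z + C*z^2)
    = A * ((A - C) * (A - B) - (2*C - B) * (B - C)) - C * (B * (A - B) - (2*C - B) * C)
      + (B - C) * (B * (B - C) - (A - C) * C)" for A B C :: 'a
    using assms by algebra
  then show ?thesis
    by (simp add: v)
qed

definition alpha :: complex where
  "alpha = Complex (- (1 + lam) / 2) (sqrt (3 * lam^2 + 2 * lam + 3) / 2)"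

lemma alpha_add_cnj: "alpha + cnj alpha = - (1 + of_real lam)"
  by (simp add: alpha_def complex_eq_iff)

lemma alpha_mult_cnj: "alpha * cnj alpha = 1 + of_real lam + (of_real lam)^2"
proof -
  have "0 \<le> 3 * lam^2 + 2 * lam + 3"
    using lam_pos by (simp add: add_nonneg_nonneg)
  then show ?thesis
    by (simp add: alpha_def complex_eq_iff power2_eq_square field_simps)
qed

lemma alpha_not_real: "Im alpha \<noteq> 0"
proof -
  have "0 < 3 * lam^2 + 2 * lam + 3"
    using lam_pos by (simp add: add_pos_nonneg)
  then show ?thesis
    by (simp add: alpha_def)
qed

lemma cubic_roots_vieta:
  "of_real lam + alpha + cnj alpha = -1"
  "of_real lam * alpha + of_real lam * cnj alpha + alpha * cnj alpha = 1"
  "of_real lam * alpha * cnj alpha = 1"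
proof -
  have lam_inverse: "of_real lam * (1 + of_real lam + (of_real lam)^2) = (1::complex)"
    using arg_cong[OF lam_mult_inverse, of "of_real :: real \<Rightarrow> complex"] by simp
  show "of_real lam + alpha + cnj alpha = -1"
    using alpha_add_cnj by (simp add: algebra_simps)
  show "of_real lam * alpha + of_real lam * cnj alpha + alpha * cnj alpha = 1"
  proof -
    have "of_real lam * alpha + of_real lam * cnj alpha + alpha * cnj alpha
        = of_real lam * (alpha + cnj alpha) + alpha * cnj alpha"
      by (simp add: algebra_simps)
    also have "\<dots> = 1"
      by (simp add: alpha_add_cnj alpha_mult_cnj algebra_simps power2_eq_square)
    finally show ?thesis .
  qed
  show "of_real lam * alpha * cnj alpha = 1"
    using lam_inverse by (simp add: alpha_mult_cnj mult.assoc)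
qed

lemma cubic_factorization:
  "x^3 + x^2 + x - 1 = (x - of_real lam) * (x - alpha) * (x - cnj alpha)"
proof -
  have "(x - of_real lam) * (x - alpha) * (x - cnj alpha)
    = x^3 - (of_real lam + alpha + cnj alpha) * x^2
      + (of_real lam * alpha + of_real lam * cnj alpha + alpha * cnj alpha) * x
      - of_real lam * alpha * cnj alpha"
    by (simp add: algebra_simps power2_eq_square power3_eq_cube)
  then show ?thesis
    by (simp add: cubic_roots_vieta)
qed

lemma prod_cubic_roots:
  "(\<Prod>x\<in>{x::complex. x^3 + x^2 + x - 1 = 0}. f x) = f (of_real lam) * f alpha * f (cnj alpha)"
proof -
  have "{x::complex. x^3 + x^2 + x - 1 = 0} = {of_real lam, alpha, cnj alpha}"
    by (auto simp: cubic_factorization)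
  moreover have "of_real lam \<noteq> alpha" "of_real lam \<noteq> cnj alpha" "alpha \<noteq> cnj alpha"
    using alpha_not_real by (auto simp: complex_eq_iff)
  ultimately show ?thesis
    by (simp add: mult.assoc)
qed

lemma alpha_cube: "alpha^3 = 1 - alpha - alpha^2"
  using cubic_factorization[of alpha] by (simp add: algebra_simps)

lemma fnorm_eval_coords:
  "fnorm (eval_coords v lam)
    = Re (eval_coords v (of_real lam) * eval_coords v alpha * eval_coords v (cnj alpha))"
proof -
  obtain a b c where v: "v = (a, b, c)"
    by (cases v) auto
  have "fnorm (eval_coords v lam) = Re (\<Prod>x\<in>{x::complex. x^3 + x^2 + x - 1 = 0}. eval_coords v x)"
    using coords_of_coords[of "of_int_coords v"]
    by (simp add: fnorm_def v of_coords_def)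
  then show ?thesis
    by (simp only: prod_cubic_roots)
qed

lemma fnorm_eq_det3:
  "fnorm (eval_coords v lam) = of_int (det3 (mult_row1 v) (mult_row2 v) (mult_row3 v))"
  by (simp add: fnorm_eval_coords eval_coords_vieta_prod[OF cubic_roots_vieta])

lemma Re_power_eq_cos:
  fixes z :: complex
  assumes "Re z = cmod z * cos \<theta>"
  shows "Re (z^n) = cmod z ^ n * cos (real n * \<theta>)"
proof -
  define r where "r = cmod z"
  have "(Re z)^2 + (Im z)^2 = r^2 * ((cos \<theta>)^2 + (sin \<theta>)^2)"
    unfolding r_def cmod_power2[symmetric] by simp
  then have "(Im z)^2 = (r * sin \<theta>)^2"
    using assms by (simp add: r_def power_mult_distrib sin_squared_eq right_diff_distrib)
  then have "Im z = r * sin \<theta> \<or> Im z = r * sin (- \<theta>)"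
    by (auto simp: power2_eq_iff)
  then have "z = rcis r \<theta> \<or> z = rcis r (- \<theta>)"
    using assms by (auto simp: complex_eq_iff r_def)
  then show ?thesis
    unfolding r_def[symmetric] by (elim disjE) (simp_all add: DeMoivre2)
qed

lemma norm_one_minus_square:
  fixes w :: complex
  shows "cmod (1 - w) ^ 2 = 1 - 2 * Re w + cmod w ^ 2"
  unfolding cmod_power2 by (simp add: power2_eq_square algebra_simps)

lemma Re_alpha_cube: "2 * Re (alpha^3) = 5 - omega"
proof -
  have "of_real (2 * Re (alpha^3)) = alpha^3 + cnj (alpha^3)"
    by (rule complex_add_cnj[symmetric])
  also have "\<dots> = (alpha + cnj alpha)^3 - 3 * (alpha * cnj alpha) * (alpha + cnj alpha)"
    by (simp add: algebra_simps power2_eq_square power3_eq_cube)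
  also have "\<dots> = of_real (2 + 3 * lam + 3 * lam^2 + 2 * lam^3)"
    by (simp add: alpha_add_cnj alpha_mult_cnj algebra_simps power2_eq_square power3_eq_cube)
  finally have "2 * Re (alpha^3) = 2 + 3 * lam + 3 * lam^2 + 2 * lam^3"
    by (simp only: of_real_eq_iff)
  then show ?thesis
    using lam_root unfolding omega_def by linarith
qed

lemma norm_alpha_cube_square: "cmod (alpha^3) ^ 2 = inverse omega"
proof -
  have "of_real (cmod (alpha^3) ^ 2) = (alpha * cnj alpha)^3"
    unfolding complex_norm_square by (simp add: power_mult_distrib)
  also have "\<dots> = of_real ((1 + lam + lam^2)^3)"
    by (simp add: alpha_mult_cnj)
  finally have "cmod (alpha^3) ^ 2 = (1 + lam + lam^2)^3"
    by (simp only: of_real_eq_iff)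
  also have "\<dots> = inverse omega"
    by (simp add: omega_def power_inverse[symmetric] inverse_unique[OF lam_mult_inverse])
  finally show ?thesis .
qed

lemma norm_alpha_cube: "cmod (alpha^3) = omega powr (- 1 / 2)"
proof -
  have "cmod (alpha^3) ^ 2 = omega powr (- 1 / 2 + - 1 / 2)"
    using omega_pos by (simp add: norm_alpha_cube_square powr_minus)
  also have "\<dots> = (omega powr (- 1 / 2))^2"
    by (simp only: power2_eq_square powr_add)
  finally show ?thesis
    by simp
qed

lemma norm_alpha_cube_gt_one: "1 < cmod (alpha^3)"
proof -
  have "1 < cmod (alpha^3) ^ 2"
    using omega_pos omega_less_one by (simp add: norm_alpha_cube_square one_less_inverse)
  then show ?thesis
    by (smt (verit) norm_ge_zero power_le_one)
qed

lemma one_minus_omega_pow_coords: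
  "1 - omega^n = eval_coords (one_minus_pow_coeffs (3 * n)) lam"
  by (simp add: eval_one_minus_pow_coeffs[OF lam_cube] omega_def power_mult)

lemma fnorm_one_minus_omega_pow:
  "fnorm (1 - omega^n) = (1 - omega^n) * cmod (1 - (alpha^3)^n) ^ 2"
proof -
  define f where "f x = eval_coords (one_minus_pow_coeffs (3 * n)) x" for x :: complex
  have f: "f x = 1 - (x^3)^n" if "x^3 = 1 - x - x^2" for x
    using eval_one_minus_pow_coeffs[OF that] by (simp add: f_def power_mult)
  have "(of_real lam :: complex)^3 = 1 - of_real lam - (of_real lam)^2"
    using arg_cong[OF lam_cube, of "of_real :: real \<Rightarrow> complex"] by simp
  then have "f (of_real lam) = of_real (1 - omega^n)"
    by (simp add: f omega_def)
  moreover have "f alpha = 1 - (alpha^3)^n"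
    by (simp add: f alpha_cube)
  moreover have "cnj alpha ^ 3 = 1 - cnj alpha - cnj alpha ^ 2"
    using arg_cong[OF alpha_cube, of cnj] by simp
  then have "f (cnj alpha) = cnj (1 - (alpha^3)^n)"
    by (simp add: f)
  ultimately have "f (of_real lam) * f alpha * f (cnj alpha)
      = of_real (1 - omega^n) * ((1 - (alpha^3)^n) * cnj (1 - (alpha^3)^n))"
    by (simp only: mult.assoc)
  also have "\<dots> = of_real ((1 - omega^n) * cmod (1 - (alpha^3)^n) ^ 2)"
    by (simp only: complex_norm_square of_real_mult)
  finally have "f (of_real lam) * f alpha * f (cnj alpha)
      = of_real ((1 - omega^n) * cmod (1 - (alpha^3)^n) ^ 2)" .
  then show ?thesis
    by (simp add: one_minus_omega_pow_coords fnorm_eval_coords f_def[symmetric])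
qed

lemma fnorm_one_minus_omega_pow_pos:
  assumes "n \<ge> 1"
  shows "fnorm (1 - omega^n) > 0"
proof -
  have "1 < cmod ((alpha^3)^n)"
    using norm_alpha_cube_gt_one assms by (simp add: norm_power one_less_power)
  then have "(alpha^3)^n \<noteq> 1"
    by auto
  moreover have "omega^n < 1"
    using omega_pos omega_less_one assms by (simp add: power_less_one_iff)
  ultimately show ?thesis
    by (simp add: fnorm_one_minus_omega_pow)
qed

lemma one_minus_pow_times_powr_identity:
  fixes x c :: real
  assumes "x > 0"
  shows "(1 - x^n) * (1 - 2 * x powr (- real n / 2) * c + (x powr (- real n / 2))^2)
    = x powr (- real n) - x^n - 2 * (x powr (- real n / 2) - x powr (real n / 2)) * c"
proof -
  have "x^n = x powr real n"
    using assms by (simp add: powr_realpow)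
  then have "x^n * (x powr (- real n / 2))^2 = 1"
    and "(x powr (- real n / 2))^2 = x powr (- real n)"
    and "x^n * x powr (- real n / 2) = x powr (real n / 2)"
    using assms by (simp_all add: power2_eq_square powr_add[symmetric])
  then show ?thesis
    by (simp add: algebra_simps)
qed

lemma fnorm_one_minus_omega_pow_formula:
  assumes "cos \<theta> = sqrt omega * (5 - omega) / 2"
  shows "fnorm (1 - omega^n) = omega powr (- real n) - omega^n
    - 2 * (omega powr (- real n / 2) - omega powr (real n / 2)) * cos (real n * \<theta>)"
proof -
  have "omega powr (- 1 / 2) * sqrt omega = 1"
    using omega_pos by (simp add: powr_half_sqrt[symmetric] powr_add[symmetric])
  then have "Re (alpha^3) = cmod (alpha^3) * cos \<theta>"
    using Re_alpha_cube by (simp add: assms norm_alpha_cube mult.assoc[symmetric])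
  then have "Re ((alpha^3)^n) = cmod (alpha^3) ^ n * cos (real n * \<theta>)"
    by (rule Re_power_eq_cos)
  moreover have "cmod (alpha^3) ^ n = omega powr (- real n / 2)"
    using omega_pos by (simp only: norm_alpha_cube) (simp add: powr_realpow[symmetric] powr_powr)
  ultimately have "Re ((alpha^3)^n) = omega powr (- real n / 2) * cos (real n * \<theta>)"
    and "cmod ((alpha^3)^n) = omega powr (- real n / 2)"
    by (simp_all only: norm_power[of "alpha^3" n])
  then show ?thesis
    using one_minus_pow_times_powr_identity[OF omega_pos, of n "cos (real n * \<theta>)"]
    by (simp only: fnorm_one_minus_omega_pow norm_one_minus_square mult.assoc)
qed

section \<open>The ideal \<open>(1 - \<omega>\<^sup>n) \<int>[\<lambda>]\<close>\<close>

lemma Least_pos_mem_dvd: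
  fixes J :: "'a::ring_1 set"
  assumes closed: "\<And>x y q. x \<in> J \<Longrightarrow> y \<in> J \<Longrightarrow> x - of_nat q * y \<in> J"
    and "0 < m" and "of_nat m \<in> J"
  shows "(LEAST k. 0 < k \<and> of_nat k \<in> J) dvd m"
proof -
  define k where "k = (LEAST k. 0 < k \<and> of_nat k \<in> J)"
  have k: "0 < k" "of_nat k \<in> J"
    using LeastI[of "\<lambda>k. 0 < k \<and> of_nat k \<in> J" m] assms(2,3) unfolding k_def by auto
  have "of_nat (m mod k) = of_nat m - of_nat (m div k) * (of_nat k :: 'a)"
    using div_mult_mod_eq[of m k] by (metis add_diff_cancel_left' of_nat_add of_nat_mult)
  then have "of_nat (m mod k) \<in> J"
    using closed[OF assms(3) k(2)] by simp
  moreover have "m mod k < k"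
    using k(1) by simp
  ultimately have "m mod k = 0"
    using not_less_Least[of "m mod k" "\<lambda>k. 0 < k \<and> of_nat k \<in> J"] unfolding k_def by auto
  then show ?thesis
    unfolding k_def by (simp add: mod_eq_0_iff_dvd)
qed

lemma Zlam_diff_mult:
  assumes "x \<in> Zlam" and "y \<in> Zlam"
  shows "x - of_int q * y \<in> Zlam"
proof -
  obtain a b c a' b' c' where
    "x = of_int a + of_int b * lam + of_int c * lam^2"
    "y = of_int a' + of_int b' * lam + of_int c' * lam^2"
    using assms by (auto simp: Zlam_def)
  then have "x - of_int q * y
      = of_int (a - q * a') + of_int (b - q * b') * lam + of_int (c - q * c') * lam^2"
    by (simp add: algebra_simps)
  then show ?thesis
    unfolding Zlam_def by blast
qed

lemma det3_mem_ideal: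
  "of_int (det3 (mult_row1 v) (mult_row2 v) (mult_row3 v)) \<in> (\<lambda>z. eval_coords v lam * z) ` Zlam"
proof -
  obtain z where "dot3 (mult_row1 v) (of_int_coords z) = of_int (det3 (mult_row1 v) (mult_row2 v) (mult_row3 v))"
    "dot3 (mult_row2 v) (of_int_coords z) = 0" "dot3 (mult_row3 v) (of_int_coords z) = 0"
    by (rule dot3_adjugate_column)
  then have "of_int (det3 (mult_row1 v) (mult_row2 v) (mult_row3 v)) = eval_coords v lam * eval_coords z lam"
    using of_coords_mult[of v "of_int_coords z"] by (simp add: of_coords_def of_coords_of_int_coords[symmetric])
  then show ?thesis
    using eval_coords_in_Zlam by blast
qed

lemma mult_Zlam_diff_mult:
  assumes "x \<in> (\<lambda>z. \<beta> * z) ` Zlam" and "y \<in> (\<lambda>z. \<beta> * z) ` Zlam"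
  shows "x - of_nat q * y \<in> (\<lambda>z. \<beta> * z) ` Zlam"
proof -
  obtain x' y' where "x = \<beta> * x'" "y = \<beta> * y'" and "x' \<in> Zlam" "y' \<in> Zlam"
    using assms by blast
  then have "x - of_nat q * y = \<beta> * (x' - of_int (int q) * y')"
    by (simp add: algebra_simps)
  moreover have "x' - of_int (int q) * y' \<in> Zlam"
    using Zlam_diff_mult \<open>x' \<in> Zlam\<close> \<open>y' \<in> Zlam\<close> by blast
  ultimately show ?thesis
    by (rule image_eqI)
qed

lemma M_dvd_det3:
  assumes "1 - omega^n = eval_coords v lam"
    and "0 < det3 (mult_row1 v) (mult_row2 v) (mult_row3 v)"
  shows "M n dvd nat (det3 (mult_row1 v) (mult_row2 v) (mult_row3 v))"
proof -
  have "of_nat (nat (det3 (mult_row1 v) (mult_row2 v) (mult_row3 v))) \<in> (\<lambda>z. eval_coords v lam * z) ` Zlam"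
    using det3_mem_ideal[of v] assms(2) by simp
  with assms(2) show ?thesis
    unfolding M_def assms(1) by (intro Least_pos_mem_dvd mult_Zlam_diff_mult) simp_all
qed

theorem mainTheorem4:
  fixes n :: nat and \<theta> :: real
  assumes "n \<ge> 1"
    and "0 < \<theta>" and "\<theta> < pi"
    and "cos \<theta> = sqrt omega * (5 - omega) / 2"
  shows "finite (I_set n)
    \<and> real (card (I_set n)) = \<bar>fnorm (1 - omega ^ n)\<bar>
    \<and> \<bar>fnorm (1 - omega ^ n)\<bar> = omega powr (- real n) - omega ^ n
         - 2 * (omega powr (- real n / 2) - omega powr (real n / 2)) * cos (real n * \<theta>)
    \<and> M n dvd card (I_set n)"
proof -
  define v where "v = one_minus_pow_coeffs (3 * n)"
  define D where "D = det3 (mult_row1 v) (mult_row2 v) (mult_row3 v)"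
  have \<beta>: "1 - omega^n = eval_coords v lam"
    by (simp add: v_def one_minus_omega_pow_coords)
  have norm: "fnorm (1 - omega^n) = of_int D"
    by (simp add: \<beta> D_def fnorm_eq_det3)
  then have "D > 0"
    using fnorm_one_minus_omega_pow_pos[OF assms(1)] by simp
  moreover have "omega^n < 1"
    using omega_pos omega_less_one assms(1) by (simp add: power_less_one_iff)
  then have "eval_coords v lam \<noteq> 0"
    using \<beta> by auto
  ultimately have "finite (I_set n) \<and> card (I_set n) = nat D"
    using card_Pi_f_divide_image[of v]
    by (simp add: I_set_def \<beta> D_def)
  moreover have "M n dvd nat D"
    using M_dvd_det3[OF \<beta>] \<open>D > 0\<close> by (simp add: D_def)
  ultimately show ?thesis
    using norm \<open>D > 0\<close> fnorm_one_minus_omega_pow_formula[OF assms(4)] by simp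
qed

end
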